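(* For all $n\geq 0$: $d_8(3n+2)\equiv 0\pmod 9$ and $d_8(9n+3)\equiv 0\pmod 9$.
   Context: For each integer $k\geq 1$, the numbers $d_k(n)$ are defined by $\sum_{n\geq 0} d_k(n)q^n = \frac{f_2^k}{f_1^{3k+1}}$, where $f_r = \prod_{i\geq 1}(1-q^{ri})$. *)

theory Defs
  imports "HOL-Computational_Algebra.Formal_Power_Series"
begin

text \<open>f_r = prod_{i>=1} (1 - q^(r i)) as a formal power series over the rationals.
  For r >= 1 the n-th coefficient of the infinite product equals the n-th coefficient
  of the finite product over i = 1..n (factors with i > n only affect degrees > n).\<close>
definition f_prod :: "nat \<Rightarrow> rat fps" where
  "f_prod r = Abs_fps (\<lambda>n. fps_nth (\<Prod>i\<in>{1..n}. (1 - fps_X ^ (r * i))) n)"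

definition d :: "nat \<Rightarrow> nat \<Rightarrow> rat" where
  "d k n = fps_nth (f_prod 2 ^ k * inverse (f_prod 1 ^ (3 * k + 1))) n"

end

theory Submission
  imports Defs "HOL-Computational_Algebra.Polynomial"
begin

text \<open>
  Write \<open>f\<^sub>r = (q\<^sup>r; q\<^sup>r)\<^sub>\<infinity>\<close>. The series \<open>D = f\<^sub>2\<^sup>8 / f\<^sub>1\<^sup>2\<^sup>5\<close> has integer coefficients. Gauss's
  identity \<open>f\<^sub>1\<^sup>2 = G f\<^sub>2\<close> with \<open>G = \<Sum> (-1)\<^sup>k q\<^sup>k\<^sup>2\<close> gives \<open>D f\<^sub>1\<^sup>2\<^sup>7 = G f\<^sub>2\<^sup>9\<close>. Since
  \<open>f\<^sub>r\<^sup>3 \<equiv> f\<^sub>3\<^sub>r (mod 3)\<close>, cubing twice yields \<open>f\<^sub>1\<^sup>2\<^sup>7 \<equiv> f\<^sub>9\<^sup>3\<close> and \<open>f\<^sub>2\<^sup>9 \<equiv> f\<^sub>6\<^sup>3 (mod 9)\<close>, and by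
  Jacobi's identity \<open>f\<^sub>6\<^sup>3\<close> is supported on the exponents \<open>6 T(t)\<close>, \<open>T(t) = t(t+1)/2\<close>. Hence
  \<open>D f\<^sub>9\<^sup>3\<close> is congruent modulo 9 to a series supported on \<open>k\<^sup>2 + 6 T(t)\<close>, and these numbers
  avoid the classes \<open>2 mod 3\<close> and \<open>3 mod 9\<close>. As \<open>f\<^sub>9\<^sup>3\<close> is a series in \<open>q\<^sup>9\<close> with constant term 1,
  the coefficients of \<open>D\<close> in these classes vanish modulo 9.

  Gauss's and Jacobi's identities are derived, up to any given degree, from a finite form of
  the triple product identity with Gaussian binomial coefficients.
\<close>

unbundle fps_syntax

section \<open>Congruences of power series up to a given degree\<close>

text \<open>For \<open>m = 0\<close> it is equality up to
  degree \<open>N\<close>, through which infinite products are compared with their partial products.\<close>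
definition cong_upto :: "'a::comm_ring_1 \<Rightarrow> nat \<Rightarrow> 'a fps \<Rightarrow> 'a fps \<Rightarrow> bool" where
  "cong_upto m N f g \<longleftrightarrow> (\<forall>i\<le>N. m dvd f $ i - g $ i)"

abbreviation eq_upto :: "nat \<Rightarrow> 'a::comm_ring_1 fps \<Rightarrow> 'a fps \<Rightarrow> bool" where
  "eq_upto \<equiv> cong_upto 0"

lemma cong_upto_refl [simp]: "cong_upto m N f f"
  by (simp add: cong_upto_def)

lemma cong_upto_sym: "cong_upto m N f g \<Longrightarrow> cong_upto m N g f"
  unfolding cong_upto_def by (metis dvd_minus_iff minus_diff_eq)

lemma cong_upto_trans [trans]:
  assumes "cong_upto m N f g" and "cong_upto m N g h"
  shows "cong_upto m N f h"
proof -
  have "f $ i - h $ i = (f $ i - g $ i) + (g $ i - h $ i)" for i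
    by simp
  with assms show ?thesis
    unfolding cong_upto_def by (metis dvd_add)
qed

lemma eq_upto_imp_cong_upto: "eq_upto N f g \<Longrightarrow> cong_upto m N f g"
  by (simp add: cong_upto_def)

lemma eq_upto_cong_upto_trans [trans]:
  "eq_upto N f g \<Longrightarrow> cong_upto m N g h \<Longrightarrow> cong_upto m N f h"
  by (metis eq_upto_imp_cong_upto cong_upto_trans)

lemma cong_upto_eq_upto_trans [trans]:
  "cong_upto m N f g \<Longrightarrow> eq_upto N g h \<Longrightarrow> cong_upto m N f h"
  by (metis eq_upto_imp_cong_upto cong_upto_trans)

lemma cong_upto_dvd: "m dvd m' \<Longrightarrow> cong_upto m' N f g \<Longrightarrow> cong_upto m N f g"
  unfolding cong_upto_def using dvd_trans by blast

lemma cong_upto_diff_zero_iff: "cong_upto m N (f - g) 0 \<longleftrightarrow> cong_upto m N f g"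
  by (simp add: cong_upto_def)

lemma cong_upto_add:
  assumes "cong_upto m N f f'" and "cong_upto m N g g'"
  shows "cong_upto m N (f + g) (f' + g')"
proof -
  have "(f + g) $ i - (f' + g') $ i = (f $ i - f' $ i) + (g $ i - g' $ i)" for i
    by (simp add: algebra_simps)
  with assms show ?thesis
    unfolding cong_upto_def by (metis dvd_add)
qed

lemma cong_upto_diff:
  assumes "cong_upto m N f f'" and "cong_upto m N g g'"
  shows "cong_upto m N (f - g) (f' - g')"
proof -
  have "(f - g) $ i - (f' - g') $ i = (f $ i - f' $ i) - (g $ i - g' $ i)" for i
    by (simp add: algebra_simps)
  with assms show ?thesis
    unfolding cong_upto_def by (metis dvd_diff)
qed

lemma cong_upto_sum:
  "(\<And>j. j \<in> A \<Longrightarrow> cong_upto m N (f j) (g j)) \<Longrightarrow>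
   cong_upto m N (\<Sum>j\<in>A. f j) (\<Sum>j\<in>A. g j)"
  unfolding cong_upto_def fps_sum_nth sum_subtractf[symmetric] by (blast intro: dvd_sum)

lemma cong_upto_mult_zero:
  assumes "cong_upto a N f 0" and "cong_upto b N g 0"
  shows "cong_upto (a * b) N (f * g) 0"
  unfolding cong_upto_def
proof (intro allI impI)
  fix i assume "i \<le> N"
  with assms have "a * b dvd f $ k * g $ (i - k)" if "k \<le> i" for k
    using that unfolding cong_upto_def by (intro mult_dvd_mono) simp_all
  then show "a * b dvd (f * g) $ i - 0 $ i"
    unfolding fps_mult_nth by (auto intro!: dvd_sum)
qed

lemma cong_upto_mult:
  assumes "cong_upto m N f f'" and "cong_upto m N g g'"
  shows "cong_upto m N (f * g) (f' * g')"
proof -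
  have one: "cong_upto 1 N h 0" for h :: "'a fps"
    by (simp add: cong_upto_def)
  have "cong_upto (1 * m) N (f * (g - g')) 0"
    using assms(2) by (intro cong_upto_mult_zero one) (simp only: cong_upto_diff_zero_iff)
  moreover have "cong_upto (1 * m) N (g' * (f - f')) 0"
    using assms(1) by (intro cong_upto_mult_zero one) (simp only: cong_upto_diff_zero_iff)
  ultimately have "cong_upto m N (f * (g - g') + g' * (f - f')) (0 + 0)"
    by (intro cong_upto_add) simp_all
  moreover have "f * (g - g') + g' * (f - f') = f * g - f' * g'"
    by (simp add: algebra_simps)
  ultimately show ?thesis
    by (simp add: cong_upto_diff_zero_iff)
qed

lemma cong_upto_power: "cong_upto m N f g \<Longrightarrow> cong_upto m N (f ^ k) (g ^ k)"
  by (induction k) (simp_all add: cong_upto_mult)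

lemma cong_upto_const_mult: "cong_upto m N (fps_const m * h) 0"
  by (simp add: cong_upto_def)

text \<open>\<open>f\<^sup>3 - g\<^sup>3 = (f - g) ((f - g)\<^sup>2 + 3 f g)\<close>, and both factors are divisible by 3.\<close>
lemma cong_upto_cube:
  assumes "cong_upto 3 N f g"
  shows "cong_upto 9 N (f ^ 3) (g ^ 3)"
proof -
  have fg: "cong_upto 3 N (f - g) 0"
    using assms by (simp only: cong_upto_diff_zero_iff)
  have "cong_upto 3 N ((f - g) * (f - g) + fps_const 3 * (f * g)) (0 + 0)"
    using cong_upto_mult[OF fg fg] by (intro cong_upto_add cong_upto_const_mult) simp
  from cong_upto_mult_zero[OF fg this[simplified]]
  have "cong_upto (3 * 3) N ((f - g) * ((f - g) * (f - g) + fps_const 3 * (f * g))) 0" .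
  moreover have "(f - g) * ((f - g) * (f - g) + fps_const 3 * (f * g)) = f ^ 3 - g ^ 3"
    by (simp add: algebra_simps power3_eq_cube fps_numeral_fps_const[symmetric])
  ultimately show ?thesis
    by (simp add: cong_upto_diff_zero_iff)
qed

lemma cong_upto_X_power_mult: "N < e \<Longrightarrow> cong_upto m N (fps_X ^ e * f) 0"
  by (simp add: cong_upto_def fps_X_power_mult_nth)

definition supported_on :: "(nat \<Rightarrow> bool) \<Rightarrow> 'a::zero fps \<Rightarrow> bool" where
  "supported_on P f \<longleftrightarrow> (\<forall>i. f $ i \<noteq> 0 \<longrightarrow> P i)"

lemma supported_on_mono: "supported_on P f \<Longrightarrow> (\<And>i. P i \<Longrightarrow> Q i) \<Longrightarrow> supported_on Q f"
  unfolding supported_on_def by blast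

lemma supported_on_mult:
  assumes "supported_on P f" and "supported_on Q g"
  shows "supported_on (\<lambda>n. \<exists>a b. n = a + b \<and> P a \<and> Q b) (f * g :: 'a::comm_semiring_0 fps)"
  unfolding supported_on_def
proof (intro allI impI)
  fix n assume "(f * g) $ n \<noteq> 0"
  then have "(\<Sum>k=0..n. f $ k * g $ (n - k)) \<noteq> 0"
    by (simp add: fps_mult_nth)
  then obtain k where "k \<le> n" "f $ k * g $ (n - k) \<noteq> 0"
    by (meson atLeastAtMost_iff sum.not_neutral_contains_not_neutral)
  then have "f $ k \<noteq> 0" "g $ (n - k) \<noteq> 0"
    by auto
  with assms have "P k" "Q (n - k)"
    by (auto simp: supported_on_def)
  with \<open>k \<le> n\<close> show "\<exists>a b. n = a + b \<and> P a \<and> Q b"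
    by (metis le_add_diff_inverse)
qed

lemma supported_on_multiples_mult:
  "supported_on (\<lambda>i. p dvd i) f \<Longrightarrow> supported_on (\<lambda>i. p dvd i) g \<Longrightarrow>
   supported_on (\<lambda>i. p dvd i) (f * g :: 'a::comm_semiring_0 fps)"
  by (rule supported_on_mono[OF supported_on_mult]) auto

lemma supported_on_multiples_power:
  "supported_on (\<lambda>i. p dvd i) f \<Longrightarrow> supported_on (\<lambda>i. p dvd i) (f ^ k :: 'a::comm_semiring_1 fps)"
proof (induction k)
  case 0
  show ?case by (simp add: supported_on_def)
next
  case (Suc k)
  then show ?case by (simp add: supported_on_multiples_mult)
qed

lemma supported_on_sum:
  "(\<And>j. j \<in> A \<Longrightarrow> supported_on P (f j)) \<Longrightarrow> supported_on P (\<Sum>j\<in>A. f j)"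
  unfolding supported_on_def fps_sum_nth by (meson sum.not_neutral_contains_not_neutral)

lemma supported_on_monom: "supported_on (\<lambda>i. i = e) (of_int c * fps_X ^ e :: 'a::comm_ring_1 fps)"
  by (simp add: supported_on_def fps_of_int[symmetric])

text \<open>Triangular elimination: the coefficients of \<open>H\<close> on a residue class modulo \<open>p\<close> are
  determined by those of \<open>H U\<close>, since \<open>U\<close> is a series in \<open>q\<^sup>p\<close> with constant term 1.\<close>
lemma dvd_coeffs_on_residue_class:
  assumes HU: "cong_upto m N (H * U) C" and U0: "U $ 0 = 1"
    and U: "supported_on (\<lambda>i. p dvd i) U"
    and C: "\<And>i. i \<le> N \<Longrightarrow> i mod p = s \<Longrightarrow> C $ i = 0"
  shows "i \<le> N \<Longrightarrow> i mod p = s \<Longrightarrow> m dvd H $ i"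
proof (induction i rule: less_induct)
  case (less i)
  have "(H * U) $ i = (\<Sum>k<Suc i. H $ k * U $ (i - k))"
    by (simp only: fps_mult_nth atLeast0AtMost lessThan_Suc_atMost)
  then have split: "(H * U) $ i = H $ i + (\<Sum>k<i. H $ k * U $ (i - k))"
    using U0 by simp
  have "m dvd (H * U) $ i - C $ i"
    using HU less.prems(1) unfolding cong_upto_def by blast
  then have "m dvd (H * U) $ i"
    using C less.prems by simp
  moreover have "m dvd (\<Sum>k<i. H $ k * U $ (i - k))"
  proof (rule dvd_sum)
    fix k assume "k \<in> {..<i}"
    show "m dvd H $ k * U $ (i - k)"
    proof (cases "U $ (i - k) = 0")
      case False
      then obtain c where "i - k = p * c"
        using U by (auto simp: supported_on_def)
      with \<open>k \<in> {..<i}\<close> have "i = k + p * c"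
        by simp
      then have "k mod p = s"
        using less.prems by simp
      then show ?thesis
        using less.IH \<open>k \<in> {..<i}\<close> less.prems by simp
    qed simp
  qed
  ultimately have "m dvd (H * U) $ i - (\<Sum>k<i. H $ k * U $ (i - k))"
    by (rule dvd_diff)
  then show ?case
    using split by simp
qed

lemma cong_upto_cancel:
  assumes "cong_upto m N (A * U) (B * U)" and "U $ 0 = 1"
  shows "cong_upto m N A B"
proof -
  have "(A - B) * U = A * U - B * U"
    by (simp add: algebra_simps)
  with assms(1) have "cong_upto m N ((A - B) * U) 0"
    by (simp add: cong_upto_diff_zero_iff)
  then show ?thesis
    using dvd_coeffs_on_residue_class[of m N "A - B" U 0 1 0] assms(2)
    by (simp add: cong_upto_def supported_on_def)
qed

section \<open>Gaussian binomial coefficients and the finite triple product\<close>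

fun qbinom :: "'a::comm_ring_1 \<Rightarrow> nat \<Rightarrow> nat \<Rightarrow> 'a" where
  "qbinom x 0 j = (if j = 0 then 1 else 0)"
| "qbinom x (Suc m) 0 = 1"
| "qbinom x (Suc m) (Suc j) = qbinom x m j + x ^ Suc j * qbinom x m (Suc j)"

fun qpoch :: "'a::comm_ring_1 \<Rightarrow> nat \<Rightarrow> 'a" where
  "qpoch x 0 = 1"
| "qpoch x (Suc k) = qpoch x k * (1 - x ^ Suc k)"

fun prod_z_plus :: "'a::comm_ring_1 \<Rightarrow> 'a \<Rightarrow> nat \<Rightarrow> 'a" where
  "prod_z_plus x z 0 = 1"
| "prod_z_plus x z (Suc a) = prod_z_plus x z a * (z + x ^ Suc a)"

fun prod_one_plus :: "'a::comm_ring_1 \<Rightarrow> 'a \<Rightarrow> nat \<Rightarrow> 'a" where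
  "prod_one_plus x z 0 = 1"
| "prod_one_plus x z (Suc b) = prod_one_plus x z b * (1 + z * x ^ Suc b)"

fun triangular :: "nat \<Rightarrow> nat" where
  "triangular 0 = 0"
| "triangular (Suc k) = triangular k + Suc k"

text \<open>\<open>triple_exp a j\<close> is the triangular number \<open>T(a - j)\<close>, extended to negative arguments
  by \<open>T(-k) = T(k - 1)\<close>.\<close>
definition triple_exp :: "nat \<Rightarrow> nat \<Rightarrow> nat" where
  "triple_exp a j = (if j \<le> a then triangular (a - j) else triangular (j - a - 1))"

lemma qbinom_0_right [simp]: "qbinom x m 0 = 1"
  by (cases m) auto

lemma qbinom_eq_0: "m < j \<Longrightarrow> qbinom x m j = 0"
proof (induction m arbitrary: j)
  case (Suc m)
  then obtain k where "j = Suc k" "m < k"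
    by (cases j) auto
  with Suc.IH show ?case
    by simp
qed simp

lemma qbinom_mult_qpoch: "j \<le> m \<Longrightarrow> qbinom x m j * qpoch x j * qpoch x (m - j) = qpoch x m"
proof (induction m arbitrary: j)
  case (Suc m)
  show ?case
  proof (cases j)
    case (Suc k)
    have "k \<le> m"
      using Suc.prems Suc by simp
    have IH1: "qbinom x m k * qpoch x k * qpoch x (m - k) = qpoch x m"
      using Suc.IH[OF \<open>k \<le> m\<close>] .
    show ?thesis
    proof (cases "Suc k \<le> m")
      case True
      have IH2: "qbinom x m (Suc k) * qpoch x (Suc k) * qpoch x (m - Suc k) = qpoch x m"
        using Suc.IH[OF True] .
      have mk: "Suc m - Suc k = Suc (m - Suc k)" "m - k = Suc (m - Suc k)"
        using True by auto
      have "Suc k + Suc (m - Suc k) = Suc m"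
        using True by simp
      then have "x ^ Suc k * x ^ Suc (m - Suc k) = x ^ Suc m"
        by (metis power_add)
      then have overlap: "x ^ Suc k * (1 - x ^ Suc (m - Suc k)) = x ^ Suc k - x ^ Suc m"
        by (simp add: right_diff_distrib)
      have "qbinom x (Suc m) j * qpoch x j * qpoch x (Suc m - j) =
          qbinom x m k * qpoch x k * qpoch x (m - k) * (1 - x ^ Suc k) +
          x ^ Suc k * (qbinom x m (Suc k) * qpoch x (Suc k) * qpoch x (m - Suc k)) *
            (1 - x ^ Suc (m - Suc k))"
        using Suc mk by (simp add: algebra_simps)
      also have "\<dots> = qpoch x m * (1 - x ^ Suc k + x ^ Suc k * (1 - x ^ Suc (m - Suc k)))"
        by (simp only: IH1 IH2) (simp add: algebra_simps)
      also note overlap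
      finally show ?thesis
        by simp
    next
      case False
      with \<open>k \<le> m\<close> have "k = m"
        by simp
      with Suc IH1 show ?thesis
        by (simp add: qbinom_eq_0 algebra_simps)
    qed
  qed simp
qed simp

lemma sum_powers_mult_linear:
  fixes A :: "nat \<Rightarrow> 'a::comm_ring_1"
  assumes "A (Suc M) = 0"
  shows "(\<Sum>j\<le>M. A j * z ^ j) * (u + v * z) =
    (\<Sum>j\<le>Suc M. (u * A j + v * (if j = 0 then 0 else A (j - 1))) * z ^ j)"
proof -
  have "(\<Sum>j\<le>M. A j * z ^ j) * (u + v * z) =
      (\<Sum>j\<le>M. u * A j * z ^ j) + (\<Sum>j\<le>M. v * A j * z ^ Suc j)"
    by (simp add: sum_distrib_right sum_distrib_left sum.distrib algebra_simps)
  also have "(\<Sum>j\<le>M. u * A j * z ^ j) = (\<Sum>j\<le>Suc M. u * A j * z ^ j)"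
    using assms by simp
  also have "(\<Sum>j\<le>M. v * A j * z ^ Suc j) =
      (\<Sum>j\<le>Suc M. v * (if j = 0 then 0 else A (j - 1)) * z ^ j)"
    by (subst sum.atMost_Suc_shift) simp
  finally show ?thesis
    by (simp add: sum.distrib[symmetric] algebra_simps)
qed

lemma prod_one_plus_Suc_shift:
  "prod_one_plus x z (Suc b) = (1 + z * x) * prod_one_plus x (z * x) b"
proof (induction b)
  case (Suc b)
  have "prod_one_plus x z (Suc (Suc b)) = prod_one_plus x z (Suc b) * (1 + z * x ^ Suc (Suc b))"
    by simp
  also have "\<dots> = (1 + z * x) * (prod_one_plus x (z * x) b * (1 + (z * x) * x ^ Suc b))"
    using Suc.IH by (simp add: algebra_simps)
  finally show ?case
    by simp
qed simp

lemma triangular_pred_add: "triangular (k - 1) + k = triangular k"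
  by (cases k) auto

lemma qbinomial_theorem:
  "(1 + z) * prod_one_plus x z b =
    (\<Sum>j\<le>Suc b. qbinom x (Suc b) j * x ^ triangular (j - 1) * z ^ j)"
proof (induction b arbitrary: z)
  case 0
  show ?case
    by (simp add: numeral_2_eq_2)
next
  case (Suc b)
  define A where "A j = qbinom x (Suc b) j * x ^ triangular (j - 1) * x ^ j" for j
  have "(1 + z) * prod_one_plus x z (Suc b) = ((1 + z * x) * prod_one_plus x (z * x) b) * (1 + 1 * z)"
    unfolding prod_one_plus_Suc_shift by (simp add: algebra_simps)
  also have "\<dots> = (\<Sum>j\<le>Suc b. A j * z ^ j) * (1 + 1 * z)"
    by (simp only: Suc.IH) (simp add: A_def algebra_simps)
  also have "\<dots> = (\<Sum>j\<le>Suc (Suc b). (1 * A j + 1 * (if j = 0 then 0 else A (j - 1))) * z ^ j)"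
    by (rule sum_powers_mult_linear) (simp add: A_def qbinom_eq_0)
  also have "\<dots> = (\<Sum>j\<le>Suc (Suc b). qbinom x (Suc (Suc b)) j * x ^ triangular (j - 1) * z ^ j)"
  proof (rule sum.cong[OF refl])
    fix j
    show "(1 * A j + 1 * (if j = 0 then 0 else A (j - 1))) * z ^ j =
        qbinom x (Suc (Suc b)) j * x ^ triangular (j - 1) * z ^ j"
    proof (cases j)
      case (Suc k)
      have pow: "x ^ triangular (k - 1) * x ^ k = x ^ triangular k"
        using triangular_pred_add[of k] by (simp add: power_add[symmetric])
      have "A (Suc k) + A k = qbinom x (Suc b) (Suc k) * x ^ triangular k * x ^ Suc k +
          qbinom x (Suc b) k * (x ^ triangular (k - 1) * x ^ k)"
        unfolding A_def by (simp add: mult.assoc)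
      also have "\<dots> = (qbinom x (Suc b) k + x ^ Suc k * qbinom x (Suc b) (Suc k)) * x ^ triangular k"
        by (simp only: pow) (simp add: algebra_simps)
      finally show ?thesis
        using Suc by simp
    qed (simp add: A_def)
  qed
  finally show ?case .
qed

lemma triple_exp_0: "triple_exp 0 j = triangular (j - 1)"
  by (simp add: triple_exp_def)

lemma triple_exp_Suc_Suc: "triple_exp (Suc a) (Suc k) = triple_exp a k"
  by (simp add: triple_exp_def)

lemma triple_exp_step: "Suc a + triple_exp a (Suc k) = Suc k + triple_exp (Suc a) (Suc k)"
proof (cases "Suc k \<le> a")
  case True
  then obtain d where "a = Suc k + d"
    using le_Suc_ex by blast
  then show ?thesis
    by (simp add: triple_exp_def)
next
  case False
  then consider "k = a" | d where "k = Suc a + d"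
    by (metis le_Suc_ex linorder_neqE_nat less_eq_Suc_le)
  then show ?thesis
    by cases (simp_all add: triple_exp_def)
qed

lemma triangular_ge: "k \<le> triangular k"
  by (induction k) auto

lemma triple_exp_ge: "(if j \<le> n then n - j else j - n - 1) \<le> triple_exp n j"
  by (simp add: triple_exp_def triangular_ge)

lemma finite_triple_product:
  "(z + 1) * prod_z_plus x z a * prod_one_plus x z b =
    (\<Sum>j\<le>a+b+1. qbinom x (a+b+1) j * x ^ triple_exp a j * z ^ j)"
proof (induction a)
  case 0
  show ?case
    using qbinomial_theorem[of z x b] by (simp add: triple_exp_0 algebra_simps)
next
  case (Suc a)
  define M where "M = a + b + 1"
  define A where "A j = qbinom x M j * x ^ triple_exp a j" for j
  have "(z + 1) * prod_z_plus x z (Suc a) * prod_one_plus x z b =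
      ((z + 1) * prod_z_plus x z a * prod_one_plus x z b) * (x ^ Suc a + 1 * z)"
    by (simp add: algebra_simps)
  also have "\<dots> = (\<Sum>j\<le>M. A j * z ^ j) * (x ^ Suc a + 1 * z)"
    by (simp only: Suc.IH) (simp add: A_def M_def)
  also have "\<dots> = (\<Sum>j\<le>Suc M. (x ^ Suc a * A j + 1 * (if j = 0 then 0 else A (j - 1))) * z ^ j)"
    by (rule sum_powers_mult_linear) (simp add: A_def qbinom_eq_0)
  also have "\<dots> = (\<Sum>j\<le>Suc M. qbinom x (Suc M) j * x ^ triple_exp (Suc a) j * z ^ j)"
  proof (rule sum.cong[OF refl])
    fix j
    show "(x ^ Suc a * A j + 1 * (if j = 0 then 0 else A (j - 1))) * z ^ j =
        qbinom x (Suc M) j * x ^ triple_exp (Suc a) j * z ^ j"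
    proof (cases j)
      case (Suc k)
      have pow: "x ^ Suc a * x ^ triple_exp a (Suc k) = x ^ Suc k * x ^ triple_exp (Suc a) (Suc k)"
        using triple_exp_step[of a k] by (simp only: power_add[symmetric])
      have "x ^ Suc a * A (Suc k) + A k =
          qbinom x M (Suc k) * (x ^ Suc a * x ^ triple_exp a (Suc k)) +
          qbinom x M k * x ^ triple_exp (Suc a) (Suc k)"
        unfolding A_def triple_exp_Suc_Suc by (simp only: mult_ac)
      also have "\<dots> = (qbinom x M k + x ^ Suc k * qbinom x M (Suc k)) * x ^ triple_exp (Suc a) (Suc k)"
        by (simp only: pow distrib_right distrib_left mult_ac add.commute)
      finally show ?thesis
        using Suc by simp
    qed (simp add: A_def triple_exp_def power_add[symmetric] algebra_simps)
  qed
  finally show ?case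
    by (simp add: M_def)
qed

lemma poly_prod_z_plus: "poly (prod_z_plus x z a) w = prod_z_plus (poly x w) (poly z w) a"
  by (induction a) auto

lemma poly_prod_one_plus: "poly (prod_one_plus x z b) w = prod_one_plus (poly x w) (poly z w) b"
  by (induction b) auto

lemma qbinom_pCons_const: "qbinom [:y:] m j = [:qbinom y m j:]"
proof (induction m arbitrary: j)
  case (Suc m)
  then show ?case
    by (cases j) (simp_all add: one_pCons poly_const_pow)
qed (simp add: one_pCons)

lemma coeff_1_linear_power: "coeff ([:-1, 1:] ^ j :: 'a::comm_ring_1 poly) 1 = - of_nat j * (-1) ^ j"
proof -
  have "coeff ([:-1, 1:] ^ j :: 'a poly) 0 = (-1) ^ j \<and> coeff ([:-1, 1:] ^ j :: 'a poly) 1 = - of_nat j * (-1) ^ j"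
  proof (induction j)
    case (Suc j)
    have "[:-1, 1:] ^ Suc j = pCons (-1) [:1:] * ([:-1, 1:] ^ j :: 'a poly)"
      by simp
    with Suc.IH show ?case
      by (simp add: coeff_pCons algebra_simps)
  qed simp
  then show ?thesis ..
qed

lemma prod_z_plus_minus_one: "prod_z_plus y (-1) n = (-1) ^ n * qpoch y n"
  by (induction n) (auto simp: algebra_simps)

lemma prod_one_plus_minus_one: "prod_one_plus y (-1) n = qpoch y n"
  by (induction n) (auto simp: algebra_simps)

text \<open>Put \<open>z = w - 1\<close> in the finite triple product and compare coefficients of \<open>w\<close>: the
  left side is \<open>w\<close> times a product whose value at \<open>w = 0\<close> is \<open>(-1)\<^sup>n (y;y)\<^sub>n\<^sup>2\<close>.\<close>
lemma finite_jacobi_identity: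
  fixes y :: "'a::comm_ring_1"
  shows "(-1) ^ n * qpoch y n ^ 2 =
    (\<Sum>j\<le>n+n+1. qbinom y (n+n+1) j * y ^ triple_exp n j * (- of_nat j * (-1) ^ j))"
proof -
  let ?z = "[:-1, 1:] :: 'a poly" and ?x = "[:y:]"
  let ?p = "prod_z_plus ?x ?z n * prod_one_plus ?x ?z n"
  have "(?z + 1) * prod_z_plus ?x ?z n * prod_one_plus ?x ?z n = pCons 0 ?p"
    by (simp add: one_pCons mult.assoc)
  then have "coeff ((?z + 1) * prod_z_plus ?x ?z n * prod_one_plus ?x ?z n) 1 = poly ?p 0"
    by (simp add: poly_0_coeff_0)
  also have "\<dots> = (-1) ^ n * qpoch y n ^ 2"
    by (simp add: poly_prod_z_plus poly_prod_one_plus prod_z_plus_minus_one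
        prod_one_plus_minus_one power2_eq_square)
  finally have lhs: "coeff ((?z + 1) * prod_z_plus ?x ?z n * prod_one_plus ?x ?z n) 1 =
      (-1) ^ n * qpoch y n ^ 2" .
  have "coeff (\<Sum>j\<le>n+n+1. qbinom ?x (n+n+1) j * ?x ^ triple_exp n j * ?z ^ j) 1 =
      (\<Sum>j\<le>n+n+1. qbinom y (n+n+1) j * y ^ triple_exp n j * (- of_nat j * (-1) ^ j))"
    unfolding coeff_sum
    by (rule sum.cong[OF refl])
      (simp add: qbinom_pCons_const poly_const_pow coeff_1_linear_power[simplified] ac_simps)
  with lhs show ?thesis
    by (simp only: finite_triple_product)
qed

section \<open>Truncated identities of Gauss and Jacobi\<close>

fun odd_qpoch :: "nat \<Rightarrow> 'a::comm_ring_1 fps" where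
  "odd_qpoch 0 = 1"
| "odd_qpoch (Suc k) = odd_qpoch k * (1 - fps_X ^ (2 * k + 1))"

definition shifted_square :: "nat \<Rightarrow> nat \<Rightarrow> nat" where
  "shifted_square n j = (if j \<le> n then (n - j)^2 else (j - n)^2)"

lemma two_mult_triangular: "2 * triangular k = k * (k + 1)"
  by (induction k) (auto simp: algebra_simps)

lemma two_mult_triple_exp: "2 * triple_exp n j + j = n + shifted_square n j"
proof (cases "j \<le> n")
  case True
  then obtain k where k: "n = j + k"
    using le_Suc_ex by blast
  have "2 * triangular k + j = j + k + k^2"
    using two_mult_triangular[of k] by (simp add: power2_eq_square algebra_simps)
  with k show ?thesis
    by (simp add: triple_exp_def shifted_square_def)
next
  case False
  then obtain k where k: "j = n + 1 + k"
    by (metis add_Suc_right le_Suc_ex not_less_eq_eq Suc_eq_plus1)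
  have "2 * triangular k + j = n + (k + 1)^2"
    using two_mult_triangular[of k] k by (simp add: power2_eq_square algebra_simps)
  with k show ?thesis
    by (simp add: triple_exp_def shifted_square_def)
qed

lemma shifted_square_ge: "(if j \<le> n then n - j else j - n) \<le> shifted_square n j"
proof -
  have "k \<le> k ^ 2" for k :: nat
    by (cases k) (simp_all add: power2_eq_square)
  then show ?thesis
    by (simp add: shifted_square_def)
qed

lemma prod_z_plus_gauss:
  "prod_z_plus (fps_X ^ 2) (- fps_X) n = (- fps_X) ^ n * (odd_qpoch n :: 'a::comm_ring_1 fps)"
proof (induction n)
  case (Suc n)
  have "(fps_X ^ 2) ^ Suc n = (fps_X :: 'a fps) ^ (2 * Suc n)"
    by (rule power_mult[symmetric])
  also have "2 * Suc n = Suc (2 * n + 1)"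
    by simp
  finally have "(fps_X ^ 2) ^ Suc n = (fps_X :: 'a fps) ^ Suc (2 * n + 1)" .
  with Suc.IH show ?case
    by (simp only: power_Suc) (simp add: algebra_simps)
qed simp

lemma prod_one_plus_gauss:
  "(1 - fps_X) * prod_one_plus (fps_X ^ 2) (- fps_X) n = (odd_qpoch (Suc n) :: 'a::comm_ring_1 fps)"
proof (induction n)
  case (Suc n)
  let ?p = "prod_one_plus (fps_X ^ 2) (- fps_X) :: nat \<Rightarrow> 'a fps"
  have "(fps_X ^ 2) ^ Suc n * fps_X = (fps_X :: 'a fps) ^ (2 * Suc n + 1)"
    by (simp only: power_mult[symmetric] power_add power_one_right)
  then have "(1 - fps_X) * ?p (Suc n) = ((1 - fps_X) * ?p n) * (1 - fps_X ^ (2 * Suc n + 1))"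
    by (simp add: algebra_simps)
  with Suc.IH show ?case
    by simp
qed simp

lemma fps_X_power_mult_cancel:
  assumes "fps_X ^ n * f = fps_X ^ n * (g :: 'a::comm_ring_1 fps)"
  shows "f = g"
proof -
  have "f * fps_X ^ n = g * fps_X ^ n"
    using assms by (simp add: mult.commute)
  then show ?thesis
    by (metis fps_shift_times_fps_X_power')
qed

text \<open>The finite triple product at \<open>x = q\<^sup>2\<close>, \<open>z = -q\<close>.\<close>
lemma finite_gauss_identity:
  "(-1) ^ n * (odd_qpoch n * odd_qpoch (Suc n)) =
    (\<Sum>j\<le>n+n+1. of_int ((-1) ^ j) * qbinom (fps_X ^ 2) (n+n+1) j *
      (fps_X ^ shifted_square n j :: 'a::comm_ring_1 fps))"
proof (rule fps_X_power_mult_cancel)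
  let ?x = "fps_X ^ 2 :: 'a fps" and ?z = "- fps_X :: 'a fps"
  have "(?z + 1) * prod_z_plus ?x ?z n * prod_one_plus ?x ?z n =
      (- fps_X) ^ n * odd_qpoch n * ((1 - fps_X) * prod_one_plus ?x ?z n)"
    by (simp only: prod_z_plus_gauss) (simp add: algebra_simps)
  also have "\<dots> = fps_X ^ n * ((-1) ^ n * (odd_qpoch n * odd_qpoch (Suc n)))"
    by (simp only: prod_one_plus_gauss power_minus[of "fps_X :: 'a fps"] mult_ac)
  finally have lhs: "(?z + 1) * prod_z_plus ?x ?z n * prod_one_plus ?x ?z n =
      fps_X ^ n * ((-1) ^ n * (odd_qpoch n * odd_qpoch (Suc n)))" .
  have summand:
    "?x ^ triple_exp n j * ?z ^ j = of_int ((-1) ^ j) * (fps_X ^ n * fps_X ^ shifted_square n j)" for j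
  proof -
    have "?x ^ triple_exp n j * ?z ^ j = (-1) ^ j * fps_X ^ (2 * triple_exp n j + j)"
      by (simp only: power_mult[symmetric] power_minus[of "fps_X :: 'a fps"] power_add mult_ac)
    also have "\<dots> = (-1) ^ j * (fps_X ^ n * fps_X ^ shifted_square n j)"
      by (simp only: two_mult_triple_exp power_add)
    finally show ?thesis
      by simp
  qed
  have "fps_X ^ n * ((-1) ^ n * (odd_qpoch n * odd_qpoch (Suc n))) =
      (?z + 1) * prod_z_plus ?x ?z n * prod_one_plus ?x ?z n"
    by (rule lhs[symmetric])
  also have "\<dots> = (\<Sum>j\<le>n+n+1. qbinom ?x (n+n+1) j * ?x ^ triple_exp n j * ?z ^ j)"
    by (rule finite_triple_product)
  also have "\<dots> = fps_X ^ n * (\<Sum>j\<le>n+n+1.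
      of_int ((-1) ^ j) * qbinom ?x (n+n+1) j * fps_X ^ shifted_square n j)"
    by (simp only: sum_distrib_left mult.assoc summand) (simp only: mult_ac)
  finally show "fps_X ^ n * ((-1) ^ n * (odd_qpoch n * odd_qpoch (Suc n))) =
      fps_X ^ n * (\<Sum>j\<le>n+n+1. of_int ((-1) ^ j) * qbinom ?x (n+n+1) j * fps_X ^ shifted_square n j)" .
qed

lemma odd_qpoch_mult_qpoch:
  "odd_qpoch k * qpoch (fps_X ^ 2) k = (qpoch fps_X (2 * k) :: 'a::comm_ring_1 fps)"
proof (induction k)
  case (Suc k)
  have "(fps_X ^ 2) ^ Suc k = (fps_X :: 'a fps) ^ (2 * Suc k)"
    by (rule power_mult[symmetric])
  also have "2 * Suc k = Suc (Suc (2 * k))"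
    by simp
  finally have "(fps_X ^ 2) ^ Suc k = (fps_X :: 'a fps) ^ Suc (Suc (2 * k))" .
  with Suc.IH[symmetric] show ?case
    by (simp add: algebra_simps)
qed simp

lemma qpoch_X_power_nth_0: "1 \<le> r \<Longrightarrow> qpoch (fps_X ^ r :: 'a::comm_ring_1 fps) k $ 0 = 1"
  by (induction k) (simp_all add: power_mult[symmetric])

lemma cong_upto_mult_one_minus_X_power: "N < e \<Longrightarrow> cong_upto m N (f * (1 - fps_X ^ e)) f"
proof -
  assume "N < e"
  then have "cong_upto m N (f - fps_X ^ e * f) (f - 0)"
    by (intro cong_upto_diff cong_upto_refl cong_upto_X_power_mult)
  then show ?thesis
    by (simp add: algebra_simps)
qed

lemma qpoch_X_power_truncate:
  assumes "1 \<le> r" and "N \<le> k"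
  shows "eq_upto N (qpoch (fps_X ^ r :: 'a::comm_ring_1 fps) k) (qpoch (fps_X ^ r) N)"
  using assms(2)
proof (induction k rule: dec_induct)
  case (step k)
  have "N < r * Suc k"
    using assms(1) step.hyps by (metis less_Suc_eq_le less_le_trans mult_1 mult_le_mono1)
  then have "eq_upto N (qpoch (fps_X ^ r) k * (1 - fps_X ^ (r * Suc k)))
      (qpoch (fps_X ^ r :: 'a fps) k)"
    by (rule cong_upto_mult_one_minus_X_power)
  then have "eq_upto N (qpoch (fps_X ^ r) (Suc k)) (qpoch (fps_X ^ r :: 'a fps) k)"
    by (simp only: qpoch.simps power_mult)
  then show ?case
    using step.IH by (rule cong_upto_trans)
qed simp

lemma qpoch_X_power_eq_upto:
  "1 \<le> r \<Longrightarrow> N \<le> k \<Longrightarrow> N \<le> k' \<Longrightarrow>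
   eq_upto N (qpoch (fps_X ^ r :: 'a::comm_ring_1 fps) k) (qpoch (fps_X ^ r) k')"
  by (metis qpoch_X_power_truncate cong_upto_sym cong_upto_trans)

lemma qbinom_eq_upto:
  assumes r: "1 \<le> r" and j: "j \<le> m" "N \<le> j" "N \<le> m - j"
  shows "eq_upto N (qbinom (fps_X ^ r :: 'a::comm_ring_1 fps) m j * qpoch (fps_X ^ r) N) 1"
proof (rule cong_upto_cancel)
  let ?P = "qpoch (fps_X ^ r :: 'a fps)" and ?q = "qbinom (fps_X ^ r :: 'a fps) m j"
  have "eq_upto N (?q * ?P N * ?P N) (?q * ?P j * ?P (m - j))"
    using j by (intro cong_upto_mult cong_upto_refl qpoch_X_power_eq_upto r) auto
  also have "?q * ?P j * ?P (m - j) = ?P m"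
    by (rule qbinom_mult_qpoch[OF j(1)])
  finally show "eq_upto N (?q * ?P N * ?P N) (1 * ?P N)"
    using qpoch_X_power_truncate[OF r, of N m] j cong_upto_trans by auto
  show "?P N $ 0 = 1"
    by (rule qpoch_X_power_nth_0[OF r])
qed

lemma sum_monomials_eq_upto:
  fixes w c :: "nat \<Rightarrow> 'a::comm_ring_1 fps"
  assumes "\<And>j. j \<in> S \<Longrightarrow> e j \<le> N \<Longrightarrow> eq_upto N (c j * Q) 1"
  shows "eq_upto N ((\<Sum>j\<in>S. w j * c j * fps_X ^ e j) * Q) (\<Sum>j\<in>S. w j * fps_X ^ e j)"
  unfolding sum_distrib_right
proof (rule cong_upto_sum)
  fix j assume "j \<in> S"
  show "eq_upto N (w j * c j * fps_X ^ e j * Q) (w j * fps_X ^ e j)"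
  proof (cases "N < e j")
    case True
    then have "eq_upto N (fps_X ^ e j * (w j * c j * Q)) 0" "eq_upto N (fps_X ^ e j * w j) 0"
      by (simp_all add: cong_upto_X_power_mult)
    then show ?thesis
      by (metis cong_upto_sym cong_upto_trans mult.commute mult.left_commute)
  next
    case False
    with assms \<open>j \<in> S\<close>
    have "eq_upto N ((w j * fps_X ^ e j) * (c j * Q)) ((w j * fps_X ^ e j) * 1)"
      by (intro cong_upto_mult cong_upto_refl) simp
    then show ?thesis
      by (simp add: ac_simps)
  qed
qed

lemma qpoch_cube_eq_upto:
  assumes r: "1 \<le> r"
  obtains J where "eq_upto N (qpoch (fps_X ^ r :: 'a::comm_ring_1 fps) N ^ 3) J"
    and "supported_on (\<lambda>i. \<exists>t. i = r * triangular t) J"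
proof
  define n where "n = 2 * N + 2"
  let ?P = "qpoch (fps_X ^ r :: 'a fps)"
  define w where "w j = (of_int (- int j * (-1) ^ j) :: 'a fps)" for j
  let ?J = "\<Sum>j\<le>n+n+1. w j * fps_X ^ (r * triple_exp n j)"
  have "(-1) ^ n = (1 :: 'a fps)"
    by (simp add: n_def)
  then have P2: "?P n ^ 2 =
      (\<Sum>j\<le>n+n+1. w j * qbinom (fps_X ^ r) (n+n+1) j * fps_X ^ (r * triple_exp n j))"
    using finite_jacobi_identity[of n "fps_X ^ r :: 'a fps"] by (simp add: w_def power_mult ac_simps)
  have "eq_upto N (?P N ^ 2 * ?P N) (?P n ^ 2 * ?P N)"
    using r by (intro cong_upto_mult cong_upto_power cong_upto_refl qpoch_X_power_eq_upto)
      (simp_all add: n_def)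
  moreover have "eq_upto N (?P n ^ 2 * ?P N) ?J"
    unfolding P2
  proof (rule sum_monomials_eq_upto)
    fix j assume j: "j \<in> {..n+n+1}" and "r * triple_exp n j \<le> N"
    moreover have "triple_exp n j \<le> r * triple_exp n j"
      using mult_le_mono1[OF r, of "triple_exp n j"] by simp
    ultimately have "(if j \<le> n then n - j else j - n - 1) \<le> N"
      using triple_exp_ge[of j n] by linarith
    then have "N \<le> j" "N \<le> (n+n+1) - j"
      using j by (auto simp: n_def split: if_splits)
    then show "eq_upto N (qbinom (fps_X ^ r) (n+n+1) j * ?P N) 1"
      using j by (intro qbinom_eq_upto r) auto
  qed
  ultimately have "eq_upto N (?P N ^ 2 * ?P N) ?J"
    by (rule cong_upto_trans)
  moreover have "?P N ^ 3 = ?P N ^ 2 * ?P N"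
    by (simp add: power2_eq_square power3_eq_cube)
  ultimately show "eq_upto N (?P N ^ 3) ?J"
    by simp
  show "supported_on (\<lambda>i. \<exists>t. i = r * triangular t) ?J"
    unfolding w_def
    by (intro supported_on_sum supported_on_mono[OF supported_on_monom]) (auto simp: triple_exp_def)
qed

lemma qpoch_square_eq_upto:
  obtains G where "eq_upto N (qpoch fps_X N ^ 2) (G * qpoch (fps_X ^ 2) N :: 'a::comm_ring_1 fps)"
    and "supported_on (\<lambda>i. \<exists>k. i = k^2) G"
proof
  define n where "n = 2 * N + 2"
  let ?Q = "qpoch (fps_X ^ 2 :: 'a fps)"
  define G where "G = (\<Sum>j\<le>n+n+1. of_int ((-1) ^ j) * fps_X ^ shifted_square n j :: 'a fps)"
  have sign: "(-1) ^ n = (1 :: 'a fps)"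
    by (simp add: n_def)
  have gauss: "odd_qpoch n * odd_qpoch (Suc n) = (\<Sum>j\<le>n+n+1.
      of_int ((-1) ^ j) * qbinom (fps_X ^ 2) (n+n+1) j * (fps_X ^ shifted_square n j :: 'a fps))"
    using finite_gauss_identity[of n, where 'a='a] unfolding sign mult_1_left .
  have G: "eq_upto N (odd_qpoch n * odd_qpoch (Suc n) * ?Q N) G"
    unfolding gauss G_def
  proof (rule sum_monomials_eq_upto)
    fix j assume j: "j \<in> {..n+n+1}" and "shifted_square n j \<le> N"
    then have "N \<le> j" "N \<le> (n+n+1) - j"
      using shifted_square_ge[of j n] by (auto simp: n_def split: if_splits)
    then show "eq_upto N (qbinom (fps_X ^ 2) (n+n+1) j * ?Q N) 1"
      using j by (intro qbinom_eq_upto) auto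
  qed
  have P: "eq_upto N (qpoch fps_X N) (qpoch (fps_X :: 'a fps) (2 * k))" if "N \<le> k" for k
    using qpoch_X_power_eq_upto[of 1 N N "2 * k"] that by simp
  have "eq_upto N (qpoch fps_X N ^ 2)
      (qpoch fps_X (2 * n) * qpoch (fps_X :: 'a fps) (2 * Suc n))"
    unfolding power2_eq_square by (intro cong_upto_mult P) (simp_all add: n_def)
  also have "qpoch fps_X (2 * n) * qpoch fps_X (2 * Suc n) =
      odd_qpoch n * odd_qpoch (Suc n) * (?Q n * ?Q (Suc n))"
    by (simp only: odd_qpoch_mult_qpoch[symmetric]) (simp only: ac_simps)
  also have "eq_upto N \<dots> (odd_qpoch n * odd_qpoch (Suc n) * (?Q N * ?Q N))"
    by (intro cong_upto_mult cong_upto_refl qpoch_X_power_eq_upto) (simp_all add: n_def)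
  also have "\<dots> = odd_qpoch n * odd_qpoch (Suc n) * ?Q N * ?Q N"
    by (simp only: mult.assoc)
  also have "eq_upto N \<dots> (G * ?Q N)"
    by (intro cong_upto_mult G cong_upto_refl)
  finally show "eq_upto N (qpoch fps_X N ^ 2) (G * ?Q N)" .
  show "supported_on (\<lambda>i. \<exists>k. i = k^2) G"
    unfolding G_def
    by (intro supported_on_sum supported_on_mono[OF supported_on_monom])
      (auto simp: shifted_square_def)
qed

section \<open>Euler products\<close>

definition euler :: "nat \<Rightarrow> 'a::comm_ring_1 fps" where
  "euler r = Abs_fps (\<lambda>n. qpoch (fps_X ^ r) n $ n)"

lemma prod_one_minus_X_power_eq_qpoch:
  "(\<Prod>i\<in>{1..n}. 1 - fps_X ^ (r * i)) = (qpoch (fps_X ^ r) n :: 'a::comm_ring_1 fps)"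
proof (induction n)
  case (Suc n)
  have "{1..Suc n} = insert (Suc n) {1..n}"
    by auto
  then have "(\<Prod>i\<in>{1..Suc n}. 1 - fps_X ^ (r * i)) =
      (1 - fps_X ^ (r * Suc n)) * (\<Prod>i\<in>{1..n}. (1 - fps_X ^ (r * i) :: 'a fps))"
    by simp
  also have "\<dots> = qpoch (fps_X ^ r) (Suc n)"
    by (simp only: Suc.IH) (simp only: qpoch.simps power_mult mult.commute)
  finally show ?case .
qed simp

lemma f_prod_eq_euler: "f_prod r = euler r"
  unfolding f_prod_def euler_def prod_one_minus_X_power_eq_qpoch ..

lemma euler_nth_0 [simp]: "euler r $ 0 = 1"
  by (simp add: euler_def)

lemma euler_eq_upto:
  assumes "1 \<le> r"
  shows "eq_upto N (euler r) (qpoch (fps_X ^ r) N :: 'a::comm_ring_1 fps)"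
  unfolding cong_upto_def
proof (intro allI impI)
  fix i assume "i \<le> N"
  have "0 dvd qpoch (fps_X ^ r) N $ i - qpoch (fps_X ^ r :: 'a fps) i $ i"
    using qpoch_X_power_truncate[OF assms \<open>i \<le> N\<close>, where 'a='a] unfolding cong_upto_def by blast
  then show "0 dvd euler r $ i - qpoch (fps_X ^ r :: 'a fps) N $ i"
    by (simp add: euler_def)
qed

lemma supported_on_qpoch_X_power:
  "supported_on (\<lambda>i. r dvd i) (qpoch (fps_X ^ r :: 'a::comm_ring_1 fps) k)"
proof (induction k)
  case 0
  show ?case by (simp add: supported_on_def)
next
  case (Suc k)
  have "(fps_X ^ r :: 'a fps) ^ Suc k = fps_X ^ (r * Suc k)"
    by (simp only: power_mult)
  then have "supported_on (\<lambda>i. r dvd i) (1 - (fps_X ^ r :: 'a fps) ^ Suc k)"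
    by (simp add: supported_on_def)
  with Suc.IH show ?case
    by (simp add: supported_on_multiples_mult)
qed

lemma supported_on_euler: "supported_on (\<lambda>i. r dvd i) (euler r)"
  using supported_on_qpoch_X_power unfolding supported_on_def euler_def by simp blast

lemma qpoch_cube_cong:
  "cong_upto 3 N (qpoch (fps_X ^ r :: 'a::comm_ring_1 fps) k ^ 3) (qpoch (fps_X ^ (3 * r)) k)"
proof (induction k)
  case (Suc k)
  define y where "y = (fps_X ^ r :: 'a fps) ^ Suc k"
  have "(1 - y) ^ 3 - (1 - y ^ 3) = fps_const 3 * (y * y - y)"
    by (simp add: algebra_simps power3_eq_cube fps_numeral_fps_const[symmetric])
  then have "cong_upto 3 N ((1 - y) ^ 3 - (1 - y ^ 3)) 0"
    by (simp only: cong_upto_const_mult)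
  then have "cong_upto 3 N ((1 - y) ^ 3) (1 - y ^ 3)"
    by (simp only: cong_upto_diff_zero_iff)
  with Suc.IH have "cong_upto 3 N (qpoch (fps_X ^ r) k ^ 3 * (1 - y) ^ 3)
      (qpoch (fps_X ^ (3 * r)) k * (1 - y ^ 3))"
    by (rule cong_upto_mult)
  moreover have "(fps_X ^ (3 * r) :: 'a fps) ^ Suc k = y ^ 3"
    unfolding y_def by (simp only: power_mult[symmetric] mult.commute mult.left_commute)
  ultimately show ?case
    by (simp only: qpoch.simps y_def power_mult_distrib)
qed simp

lemma euler_cube_cong:
  assumes "1 \<le> r"
  shows "cong_upto 3 N (euler r ^ 3) (euler (3 * r))"
proof -
  have "eq_upto N (euler r ^ 3) (qpoch (fps_X ^ r) N ^ 3)"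
    using assms by (intro cong_upto_power euler_eq_upto)
  also have "cong_upto 3 N \<dots> (qpoch (fps_X ^ (3 * r)) N)"
    by (rule qpoch_cube_cong)
  also have "eq_upto N \<dots> (euler (3 * r))"
    using assms by (auto intro: cong_upto_sym[OF euler_eq_upto])
  finally show ?thesis .
qed

lemma euler_power_9_cong:
  assumes "1 \<le> r"
  shows "cong_upto 9 N (euler r ^ 9) (euler (3 * r) ^ 3 :: 'a::comm_ring_1 fps)"
  using cong_upto_cube[OF euler_cube_cong[OF assms]] by (simp flip: power_mult)

lemma euler_power_27_cong:
  assumes "1 \<le> r"
  shows "cong_upto 9 N (euler r ^ 27) (euler (9 * r) ^ 3 :: 'a::comm_ring_1 fps)"
proof -
  have "cong_upto 3 N (euler r ^ 9) (euler (3 * r) ^ 3 :: 'a fps)"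
    using euler_power_9_cong[OF assms] by (rule cong_upto_dvd[rotated]) (rule dvdI[of _ _ 3], simp)
  then have "cong_upto 9 N (euler r ^ 27) (euler (3 * r) ^ 9 :: 'a fps)"
    using cong_upto_cube by (fastforce simp flip: power_mult)
  also have "cong_upto 9 N \<dots> (euler (9 * r) ^ 3)"
    using euler_power_9_cong[of "3 * r"] assms by simp
  finally show ?thesis .
qed

lemma euler_cube_eq_upto:
  assumes "1 \<le> r"
  obtains J where "eq_upto N (euler r ^ 3) (J :: 'a::comm_ring_1 fps)"
    and "supported_on (\<lambda>i. \<exists>t. i = r * triangular t) J"
proof -
  obtain J where J: "eq_upto N (qpoch (fps_X ^ r :: 'a fps) N ^ 3) J"
    and "supported_on (\<lambda>i. \<exists>t. i = r * triangular t) J"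
    using qpoch_cube_eq_upto[OF assms] by blast
  moreover have "eq_upto N (euler r ^ 3) (qpoch (fps_X ^ r :: 'a fps) N ^ 3)"
    using assms by (intro cong_upto_power euler_eq_upto)
  ultimately show ?thesis
    using that cong_upto_trans by blast
qed

lemma euler_square_eq_upto:
  obtains G where "eq_upto N (euler 1 ^ 2) (G * euler 2 :: 'a::comm_ring_1 fps)"
    and "supported_on (\<lambda>i. \<exists>k. i = k^2) G"
proof -
  obtain G where G: "eq_upto N (qpoch fps_X N ^ 2) (G * qpoch (fps_X ^ 2) N :: 'a fps)"
    and "supported_on (\<lambda>i. \<exists>k. i = k^2) G"
    by (rule qpoch_square_eq_upto)
  moreover have "eq_upto N (euler 1 ^ 2) (qpoch fps_X N ^ 2 :: 'a fps)"
    using euler_eq_upto[of 1 N] by (intro cong_upto_power) simp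
  moreover have "eq_upto N (G * qpoch (fps_X ^ 2) N) (G * euler 2)"
    by (intro cong_upto_mult cong_upto_refl) (rule cong_upto_sym[OF euler_eq_upto], simp)
  ultimately show ?thesis
    using that cong_upto_trans by blast
qed

definition of_int_fps :: "int fps \<Rightarrow> 'a::comm_ring_1 fps" where
  "of_int_fps f = Abs_fps (\<lambda>n. of_int (f $ n))"

lemma of_int_fps_nth [simp]: "of_int_fps f $ n = of_int (f $ n)"
  by (simp add: of_int_fps_def)

lemma of_int_fps_mult: "of_int_fps (f * g) = of_int_fps f * of_int_fps g"
  by (simp add: fps_eq_iff fps_mult_nth)

lemma of_int_fps_one [simp]: "of_int_fps 1 = 1"
  by (simp add: fps_eq_iff)

lemma of_int_fps_power: "of_int_fps (f ^ k) = of_int_fps f ^ k"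
  by (induction k) (simp_all add: of_int_fps_mult)

lemma of_int_fps_qpoch_X_power:
  "of_int_fps (qpoch (fps_X ^ r) k) = (qpoch (fps_X ^ r) k :: 'a::comm_ring_1 fps)"
proof (induction k)
  case (Suc k)
  have "of_int_fps (1 - fps_X ^ i) = (1 - fps_X ^ i :: 'a fps)" for i
    by (simp add: fps_eq_iff)
  with Suc.IH show ?case
    by (simp only: qpoch.simps power_mult[symmetric] of_int_fps_mult)
qed simp

lemma of_int_fps_euler: "of_int_fps (euler r) = (euler r :: 'a::comm_ring_1 fps)"
proof (rule fps_ext)
  fix n
  have "of_int_fps (qpoch (fps_X ^ r) n) $ n = (qpoch (fps_X ^ r) n :: 'a fps) $ n"
    by (simp only: of_int_fps_qpoch_X_power)
  then show "of_int_fps (euler r) $ n = (euler r :: 'a fps) $ n"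
    by (simp add: euler_def)
qed

text \<open>\<open>f\<^sub>1\<close> has constant term 1, so it is a unit among the integer power series.\<close>
definition d_int :: "nat \<Rightarrow> int fps" where
  "d_int k = euler 2 ^ k * fps_right_inverse (euler 1 ^ (3 * k + 1)) 1"

lemma d_int_mult_euler: "d_int k * euler 1 ^ (3 * k + 1) = euler 2 ^ k"
proof -
  have "euler 1 ^ (3 * k + 1) * fps_right_inverse (euler 1 ^ (3 * k + 1)) 1 = (1 :: int fps)"
    by (rule fps_right_inverse) (simp add: fps_power_zeroth_eq_one)
  then show ?thesis
    by (simp add: d_int_def ac_simps)
qed

lemma d_eq_of_int_d_int: "d k n = of_int (d_int k $ n)"
proof -
  let ?F = "f_prod 1 ^ (3 * k + 1)"
  have prod: "of_int_fps (d_int k) * ?F = f_prod 2 ^ k"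
    using arg_cong[OF d_int_mult_euler, of of_int_fps k]
    by (simp add: of_int_fps_mult of_int_fps_power of_int_fps_euler f_prod_eq_euler)
  have inv: "?F * inverse ?F = 1"
    by (rule inverse_mult_eq_1') (simp add: fps_power_zeroth_eq_one f_prod_eq_euler)
  have "f_prod 2 ^ k * inverse ?F = of_int_fps (d_int k) * (?F * inverse ?F)"
    by (simp only: prod[symmetric] mult.assoc)
  also have "\<dots> = of_int_fps (d_int k)"
    by (simp only: inv mult_1_right)
  finally have "f_prod 2 ^ k * inverse ?F = of_int_fps (d_int k)" .
  then show ?thesis
    by (simp add: d_def)
qed

section \<open>The congruences for \<open>d\<^sub>8\<close>\<close>

lemma d_int_8_cong:
  obtains C where "cong_upto 9 N (d_int 8 * euler 9 ^ 3) C"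
    and "supported_on (\<lambda>i. \<exists>k t. i = k^2 + 6 * triangular t) C"
proof -
  obtain G where G: "eq_upto N (euler 1 ^ 2) (G * euler 2 :: int fps)"
    and G_supp: "supported_on (\<lambda>i. \<exists>k. i = k^2) G"
    by (rule euler_square_eq_upto)
  obtain J where J: "eq_upto N (euler 6 ^ 3) (J :: int fps)"
    and J_supp: "supported_on (\<lambda>i. \<exists>t. i = 6 * triangular t) J"
    by (rule euler_cube_eq_upto[OF one_le_numeral])
  have "cong_upto 9 N (euler 1 ^ 27) (euler 9 ^ 3 :: int fps)"
    using euler_power_27_cong[of 1 N] by simp
  then have "cong_upto 9 N (d_int 8 * euler 9 ^ 3) (d_int 8 * euler 1 ^ 27)"
    by (rule cong_upto_mult[OF cong_upto_refl cong_upto_sym])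
  also have "d_int 8 * euler 1 ^ 27 = euler 2 ^ 8 * euler 1 ^ 2"
  proof -
    have "(euler 1 ^ 27 :: int fps) = euler 1 ^ (3 * 8 + 1) * euler 1 ^ 2"
      by (simp flip: power_add)
    then show ?thesis
      using d_int_mult_euler[of 8] by (simp only: mult.assoc[symmetric])
  qed
  also have "eq_upto N \<dots> (euler 2 ^ 8 * (G * euler 2))"
    using G by (intro cong_upto_mult cong_upto_refl)
  also have "\<dots> = G * euler 2 ^ 9"
    by (simp only: power_Suc2[of _ 8, simplified] ac_simps)
  also have "cong_upto 9 N \<dots> (G * euler 6 ^ 3)"
    using euler_power_9_cong[of 2 N] by (intro cong_upto_mult cong_upto_refl) simp
  also have "eq_upto N \<dots> (G * J)"
    using J by (intro cong_upto_mult cong_upto_refl)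
  finally have "cong_upto 9 N (d_int 8 * euler 9 ^ 3) (G * J)" .
  moreover have "supported_on (\<lambda>i. \<exists>k t. i = k^2 + 6 * triangular t) (G * J)"
    using supported_on_mult[OF G_supp J_supp] by (rule supported_on_mono) blast
  ultimately show thesis
    by (rule that)
qed

lemma d_8_dvd_9_on_residue_class:
  assumes "n mod p = s" and "p dvd 9"
    and "\<And>i k t. i mod p = s \<Longrightarrow> i \<noteq> k^2 + 6 * triangular t"
  shows "\<exists>m::int. d 8 n = 9 * of_int m"
proof -
  obtain C where C: "cong_upto 9 n (d_int 8 * euler 9 ^ 3) C"
    and C_supp: "supported_on (\<lambda>i. \<exists>k t. i = k^2 + 6 * triangular t) C"
    by (rule d_int_8_cong)
  have "C $ i = 0" if "i mod p = s" for i
    using C_supp assms(3)[OF that] by (auto simp: supported_on_def)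
  moreover have "supported_on (\<lambda>i. p dvd i) (euler 9 ^ 3 :: int fps)"
    using supported_on_euler[of 9] assms(2)
    by (intro supported_on_multiples_power) (auto elim: supported_on_mono intro: dvd_trans)
  moreover have "(euler 9 ^ 3 :: int fps) $ 0 = 1"
    by (simp add: fps_power_zeroth_eq_one)
  ultimately have "9 dvd d_int 8 $ n"
    using dvd_coeffs_on_residue_class[OF C] assms(1) by blast
  then show ?thesis
    by (auto simp: d_eq_of_int_d_int)
qed

lemma square_mod_3: "(k::nat)^2 mod 3 = (if k mod 3 = 0 then 0 else 1)"
proof -
  have "k^2 mod 3 = (k mod 3)^2 mod 3"
    by (simp add: power_mod)
  moreover have "k mod 3 = 0 \<or> k mod 3 = 1 \<or> k mod 3 = 2"
    by arith
  ultimately show ?thesis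
    by auto
qed

lemma mult_Suc_self_mod_3: "(t * Suc t) mod 3 \<noteq> (1::nat)"
proof -
  have "(t * Suc t) mod 3 = ((t mod 3) * (Suc (t mod 3) mod 3)) mod 3"
    by (simp add: mod_mult_eq mod_Suc_eq)
  moreover have "t mod 3 = 0 \<or> t mod 3 = 1 \<or> t mod 3 = 2"
    by arith
  ultimately show ?thesis
    by auto
qed

lemma square_plus_6_triangular_mod_3: "(k^2 + 6 * triangular t) mod 3 \<noteq> 2"
proof -
  have "(x + 6 * y) mod 3 = x mod 3" for x y :: nat
    by presburger
  then have "(k^2 + 6 * triangular t) mod 3 = k^2 mod 3" .
  then show ?thesis
    by (simp add: square_mod_3)
qed

lemma square_plus_6_triangular_mod_9: "(k^2 + 6 * triangular t) mod 9 \<noteq> 3"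
proof
  assume mod9: "(k^2 + 6 * triangular t) mod 9 = 3"
  moreover have "(x + 6 * y) mod 9 = 3 \<Longrightarrow> x mod 3 = 0" for x y :: nat
    by presburger
  ultimately have "k^2 mod 3 = 0"
    by blast
  then obtain a where "k = 3 * a"
    by (metis square_mod_3 mod_0_imp_dvd dvdE zero_neq_one)
  moreover have "6 * triangular t = 3 * (t * Suc t)"
    using two_mult_triangular[of t] by simp
  ultimately have "(9 * a^2 + 3 * (t * Suc t)) mod 9 = 3"
    using mod9 by (simp add: power_mult_distrib)
  moreover have "(9 * y + 3 * x) mod 9 = 3 \<Longrightarrow> x mod 3 = 1" for x y :: nat
    by presburger
  ultimately have "(t * Suc t) mod 3 = 1"
    by blast
  then show False
    using mult_Suc_self_mod_3 by blast
qed

theorem theorem3p6: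
  fixes n :: nat
  shows "(\<exists>m::int. d 8 (3 * n + 2) = 9 * of_int m) \<and>
         (\<exists>m::int. d 8 (9 * n + 3) = 9 * of_int m)"
proof
  have "(3 * n + 2) mod 3 = 2"
    by presburger
  then show "\<exists>m::int. d 8 (3 * n + 2) = 9 * of_int m"
    by (rule d_8_dvd_9_on_residue_class[where p = 3]) (use square_plus_6_triangular_mod_3 in auto)
  have "(9 * n + 3) mod 9 = 3"
    by presburger
  then show "\<exists>m::int. d 8 (9 * n + 3) = 9 * of_int m"
    by (rule d_8_dvd_9_on_residue_class[where p = 9]) (use square_plus_6_triangular_mod_9 in auto)
qed

end
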